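(* Let $n\ge 2$ and let $q=(q_1,\dots,q_n)\in\mathbb{R}^n$ with $\sum_{i=1}^n q_i=1$ and $q_n\neq 0$. Let $Q_1$ be the $(n-1)\times(n-1)$ matrix with entries $(Q_1)_{ij}=q_i-\delta_{ij}$, and $Q_2$ the $(n-1)\times(n-1)$ matrix with entries $(Q_2)_{ij}=\frac{1}{q_n}(q_n\delta_{ij}+q_i)$. Let $A_0=(a_{ij})_{1\le i,j\le n-1}$ be any real $(n-1)\times(n-1)$ matrix and let $A$ be the $n\times n$ matrix whose entries are $a_{ij}$ for $i,j\le n-1$, $a_{in}=-\sum_{j=1}^{n-1}\frac{q_j}{q_n}a_{ij}$ for $i\le n-1$, and whose last row is zero. Let $\bar Q_1=(\bar q_{ij})$ be an $(n-1)\times(n-1)$ matrix such that $(\bar Q_1)^tQ_1$ is diagonal. If there exists $d=(d_1,\dots,d_{n-1})\in\mathbb{R}^{n-1}$ such that the matrix $\bar Q_1\,\mathrm{diag}(d_i)_i\,A_0\,Q_2$ is skew-symmetric, then the function $$H_D(u)=\sum_{i=1}^{n-1}d_i\Big(\sum_{k=1}^{n-1}\bar q_{ki}q_k\Big)u_i+\sum_{i=1}^{n-1}d_i\Big(\Big(\sum_{k=1}^{n-1}\bar q_{ki}q_k\Big)-\bar q_{ii}\Big)e^{u_i}$$ is a constant of motion of the vector field $\tilde X_B(u)=B\eta_q(u)$ on $\mathbb{R}^{n-1}$, where $B=-EAE^t$, and consequently $$H_D\circ\phi^{-1}(x)=\sum_{i=1}^{n-1}d_i\Big(\sum_{k=1}^{n-1}\bar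 q_{ki}q_k\Big)\log\Big(\frac{x_i}{x_n}\Big)+\sum_{i=1}^{n-1}d_i\Big(\Big(\sum_{k=1}^{n-1}\bar q_{ki}q_k\Big)-\bar q_{ii}\Big)\frac{x_i}{x_n}$$ is a constant of motion of the replicator vector field $X_A$ on the interior of $\Delta^{n-1}$.
   Context: $\Delta^{n-1}=\{x\in\mathbb{R}^n: x_i\ge 0,\ \sum_i x_i=1\}$. The replicator vector field with payoff matrix $A$ is $X_A(x)_i=x_i\big((Ax)_i-x^tAx\big)$ on $\Delta^{n-1}$. $E=[-I_{n-1}\mid\mathbb{1}]$ is the $(n-1)\times n$ matrix whose row $i$ has $-1$ in column $i$, $1$ in column $n$ and zeros elsewhere. $\eta_q(u)_i=q_i-\frac{e^{u_i}}{1+\sum_{j=1}^{n-1}e^{u_j}}$ for $u\in\mathbb{R}^{n-1}$, $1\le i\le n-1$. $\phi:\mathbb{R}^{n-1}\to(\Delta^{n-1})^\circ$ is the diffeomorphism $\phi(u)=\big(\frac{e^{u_1}}{1+\sum_j e^{u_j}},\dots,\frac{e^{u_{n-1}}}{1+\sum_j e^{u_j}},\frac{1}{1+\sum_j e^{u_j}}\big)$, so $\phi^{-1}(x)=(\log(x_i/x_n))_{i\le n-1}$; $\tilde X_B$ is the pullback of $X_A$ by $\phi$. A constant of motion is a function constant along integral curves. *)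

theory Defs
  imports "HOL-Analysis.Analysis"
begin

(* Conventions: vectors in R^m are functions nat => real, with coordinates 1..m used;
   matrices are functions nat => nat => real with indices 1-based. *)

definition kdelta :: "nat \<Rightarrow> nat \<Rightarrow> real" where
  "kdelta i j = (if i = j then 1 else 0)"

definition matQ1 :: "(nat \<Rightarrow> real) \<Rightarrow> nat \<Rightarrow> nat \<Rightarrow> real" where
  "matQ1 q i j = q i - kdelta i j"

definition matQ2 :: "nat \<Rightarrow> (nat \<Rightarrow> real) \<Rightarrow> nat \<Rightarrow> nat \<Rightarrow> real" where
  "matQ2 n q i j = (1 / q n) * (q n * kdelta i j + q i)"

definition matA :: "nat \<Rightarrow> (nat \<Rightarrow> real) \<Rightarrow> (nat \<Rightarrow> nat \<Rightarrow> real) \<Rightarrow> nat \<Rightarrow> nat \<Rightarrow> real" where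
  "matA n q A0 i j =
     (if i = n then 0
      else if j = n then - (\<Sum>k=1..n-1. (q k / q n) * A0 i k)
      else A0 i j)"

definition matE :: "nat \<Rightarrow> nat \<Rightarrow> nat \<Rightarrow> real" where
  "matE n i j = (if j = i then -1 else 0) + (if j = n then 1 else 0)"

definition matB :: "nat \<Rightarrow> (nat \<Rightarrow> nat \<Rightarrow> real) \<Rightarrow> nat \<Rightarrow> nat \<Rightarrow> real" where
  "matB n A i j = - (\<Sum>k=1..n. \<Sum>l=1..n. matE n i k * A k l * matE n j l)"

definition eta :: "nat \<Rightarrow> (nat \<Rightarrow> real) \<Rightarrow> (nat \<Rightarrow> real) \<Rightarrow> nat \<Rightarrow> real" where
  "eta n q u i = q i - exp (u i) / (1 + (\<Sum>j=1..n-1. exp (u j)))"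

definition XBtilde :: "nat \<Rightarrow> (nat \<Rightarrow> nat \<Rightarrow> real) \<Rightarrow> (nat \<Rightarrow> real) \<Rightarrow> (nat \<Rightarrow> real) \<Rightarrow> nat \<Rightarrow> real" where
  "XBtilde n B q u i = (\<Sum>j=1..n-1. B i j * eta n q u j)"

definition replicator :: "nat \<Rightarrow> (nat \<Rightarrow> nat \<Rightarrow> real) \<Rightarrow> (nat \<Rightarrow> real) \<Rightarrow> nat \<Rightarrow> real" where
  "replicator n A x i =
     x i * ((\<Sum>j=1..n. A i j * x j) - (\<Sum>k=1..n. \<Sum>j=1..n. x k * A k j * x j))"

definition simplex_interior :: "nat \<Rightarrow> (nat \<Rightarrow> real) set" where
  "simplex_interior n = {x. (\<forall>i\<in>{1..n}. 0 < x i) \<and> (\<Sum>i=1..n. x i) = 1}"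

definition integral_curve ::
  "nat \<Rightarrow> ((nat \<Rightarrow> real) \<Rightarrow> nat \<Rightarrow> real) \<Rightarrow> (nat \<Rightarrow> real) set \<Rightarrow> real set \<Rightarrow> (real \<Rightarrow> nat \<Rightarrow> real) \<Rightarrow> bool" where
  "integral_curve m X S T \<gamma> \<longleftrightarrow>
     is_interval T \<and>
     (\<forall>t\<in>T. \<gamma> t \<in> S \<and>
        (\<forall>i\<in>{1..m}. ((\<lambda>s. \<gamma> s i) has_real_derivative X (\<gamma> t) i) (at t within T)))"

definition constant_of_motion ::
  "nat \<Rightarrow> ((nat \<Rightarrow> real) \<Rightarrow> nat \<Rightarrow> real) \<Rightarrow> (nat \<Rightarrow> real) set \<Rightarrow> ((nat \<Rightarrow> real) \<Rightarrow> real) \<Rightarrow> bool" where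
  "constant_of_motion m X S H \<longleftrightarrow>
     (\<forall>T \<gamma>. integral_curve m X S T \<gamma> \<longrightarrow> (\<forall>s\<in>T. \<forall>t\<in>T. H (\<gamma> s) = H (\<gamma> t)))"

end

theory Submission
  imports Defs
begin

text \<open>
Write \<open>Qbar\<close> for \<open>Q\<^sub>1\<close> with a bar and \<open>c\<^sub>i = \<Sum>\<^sub>k Qbar\<^sub>k\<^sub>i q\<^sub>k\<close>. A direct computation gives
\<open>B = -A\<^sub>0 Q\<^sub>2\<close>. Since \<open>Qbar\<^sup>t Q\<^sub>1\<close> is diagonal, every off-diagonal entry of column \<open>i\<close>
of \<open>Qbar\<close> equals \<open>c\<^sub>i\<close>; hence \<open>\<partial>H\<^sub>D/\<partial>u\<^sub>i = S(u) d\<^sub>i (Qbar\<^sup>t \<eta>\<^sub>q(u))\<^sub>i\<close> with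
\<open>S(u) = 1 + \<Sum>\<^sub>j e\<^sup>u\<^sup>j\<close>. The derivative of \<open>H\<^sub>D\<close> along \<open>B \<eta>\<^sub>q\<close> is thus
\<open>-S(u) \<eta>\<^sup>t (Qbar D A\<^sub>0 Q\<^sub>2) \<eta>\<close>, which vanishes because \<open>Qbar D A\<^sub>0 Q\<^sub>2\<close> is skew-symmetric.

For the replicator field, \<open>\<phi>\<^sup>-\<^sup>1\<close> sends integral curves to integral curves: along a replicator
orbit \<open>d/dt log(x\<^sub>i/x\<^sub>n) = (Ax)\<^sub>i - (Ax)\<^sub>n = (Ax)\<^sub>i\<close> as the last row of \<open>A\<close> vanishes, and
\<open>(B \<eta>\<^sub>q(\<phi>\<^sup>-\<^sup>1 x))\<^sub>i = (Ax)\<^sub>i\<close> on the simplex.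
\<close>

lemma sum_atLeastAtMost_split_last:
  "1 \<le> (n::nat) \<Longrightarrow> (\<Sum>i=1..n. f i) = (\<Sum>i=1..n-1. f i) + (f n :: real)"
  by (cases n) (auto simp: sum.cl_ivl_Suc)

lemma sum_matrix_mult_assoc:
  "(\<Sum>j\<in>J. (\<Sum>l\<in>L. a l * b l j) * v j) = (\<Sum>l\<in>L. a l * (\<Sum>j\<in>J. b l j * (v j :: real)))"
  by (simp add: sum_distrib_left sum_distrib_right mult.assoc) (rule sum.swap)

lemma sum_transpose_mult_mult:
  "(\<Sum>i\<in>I. (\<Sum>k\<in>I. P k i * v k) * (\<Sum>j\<in>I. R i j * v j))
   = (\<Sum>k\<in>I. \<Sum>j\<in>I. v k * (\<Sum>i\<in>I. P k i * R i j) * (v j :: real))"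
proof -
  have "(\<Sum>i\<in>I. (\<Sum>k\<in>I. P k i * v k) * (\<Sum>j\<in>I. R i j * v j))
      = (\<Sum>i\<in>I. \<Sum>k\<in>I. \<Sum>j\<in>I. v k * (P k i * R i j) * v j)"
    by (simp add: sum_product mult_ac)
  also have "\<dots> = (\<Sum>k\<in>I. \<Sum>i\<in>I. \<Sum>j\<in>I. v k * (P k i * R i j) * v j)"
    by (rule sum.swap)
  also have "\<dots> = (\<Sum>k\<in>I. \<Sum>j\<in>I. \<Sum>i\<in>I. v k * (P k i * R i j) * v j)"
    by (rule sum.cong[OF refl], rule sum.swap)
  also have "\<dots> = (\<Sum>k\<in>I. \<Sum>j\<in>I. v k * (\<Sum>i\<in>I. P k i * R i j) * v j)"
    by (simp add: sum_distrib_left sum_distrib_right)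
  finally show ?thesis .
qed

lemma skew_quadratic_form_eq_0:
  assumes "\<forall>i\<in>I. \<forall>j\<in>I. M i j = - M j i"
  shows "(\<Sum>i\<in>I. \<Sum>j\<in>I. v i * M i j * v j) = (0::real)"
proof -
  have "(\<Sum>i\<in>I. \<Sum>j\<in>I. v i * M i j * v j) = (\<Sum>i\<in>I. \<Sum>j\<in>I. - (v j * M j i * v i))"
  proof (intro sum.cong refl)
    fix i j assume "i \<in> I" "j \<in> I"
    then have "M i j = - M j i" using assms by blast
    then show "v i * M i j * v j = - (v j * M j i * v i)" by simp
  qed
  also have "\<dots> = - (\<Sum>i\<in>I. \<Sum>j\<in>I. v i * M i j * v j)"
    by (subst sum.swap) (simp add: sum_negf)
  finally show ?thesis by simp
qed

lemma constant_of_motion_sum_separable: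
  assumes "\<And>i y. i \<in> {1..m} \<Longrightarrow> (f i has_real_derivative f' i y) (at y)"
    and "\<And>u. u \<in> S \<Longrightarrow> (\<Sum>i=1..m. f' i (u i) * X u i) = 0"
  shows "constant_of_motion m X S (\<lambda>u. \<Sum>i=1..m. f i (u i))"
  unfolding constant_of_motion_def
proof (intro allI impI ballI)
  fix T \<gamma> s t
  assume curve: "integral_curve m X S T \<gamma>" and "s \<in> T" "t \<in> T"
  have "((\<lambda>t. \<Sum>i=1..m. f i (\<gamma> t i)) has_real_derivative 0) (at t within T)" if "t \<in> T" for t
  proof -
    have "((\<lambda>t. \<Sum>i=1..m. f i (\<gamma> t i)) has_real_derivative (\<Sum>i=1..m. f' i (\<gamma> t i) * X (\<gamma> t) i))
        (at t within T)"
      using curve that by (intro DERIV_sum DERIV_chain2[OF assms(1)]) (auto simp: integral_curve_def)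
    moreover have "\<gamma> t \<in> S" using curve that by (simp add: integral_curve_def)
    ultimately show ?thesis using assms(2) by simp
  qed
  moreover have "convex T" using curve by (simp add: integral_curve_def is_interval_convex)
  ultimately obtain c where "\<forall>t\<in>T. (\<Sum>i=1..m. f i (\<gamma> t i)) = c"
    using has_field_derivative_zero_constant by blast
  then show "(\<Sum>i=1..m. f i (\<gamma> s i)) = (\<Sum>i=1..m. f i (\<gamma> t i))"
    using \<open>s \<in> T\<close> \<open>t \<in> T\<close> by simp
qed

lemma constant_of_motion_pullback:
  assumes "constant_of_motion m X S H"
    and "\<And>T \<gamma>. integral_curve n Y S' T \<gamma> \<Longrightarrow> integral_curve m X S T (\<lambda>t. \<psi> (\<gamma> t))"
    and "\<And>x. x \<in> S' \<Longrightarrow> H' x = H (\<psi> x)"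
  shows "constant_of_motion n Y S' H'"
  unfolding constant_of_motion_def
proof (intro allI impI ballI)
  fix T \<gamma> s t
  assume curve: "integral_curve n Y S' T \<gamma>" and "s \<in> T" "t \<in> T"
  then have "H (\<psi> (\<gamma> s)) = H (\<psi> (\<gamma> t))"
    using assms(1,2) unfolding constant_of_motion_def by blast
  moreover have "\<gamma> s \<in> S'" "\<gamma> t \<in> S'"
    using curve \<open>s \<in> T\<close> \<open>t \<in> T\<close> by (auto simp: integral_curve_def)
  ultimately show "H' (\<gamma> s) = H' (\<gamma> t)" using assms(3) by simp
qed

lemma sum_matE_mult:
  assumes "i \<in> {1..n-1}"
  shows "(\<Sum>k=1..n. matE n i k * f k) = f n - f i"
proof -
  have "(\<Sum>k=1..n. matE n i k * f k)
      = (\<Sum>k=1..n. (if k = i then - f k else 0) + (if k = n then f k else 0))"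
    using assms by (intro sum.cong) (auto simp: matE_def)
  also have "\<dots> = f n - f i" using assms by (auto simp: sum.distrib)
  finally show ?thesis .
qed

lemma matQ2_mult:
  assumes "q n \<noteq> 0" "l \<in> {1..n-1}"
  shows "(\<Sum>j=1..n-1. matQ2 n q l j * v j) = v l + q l / q n * (\<Sum>j=1..n-1. v j)"
proof -
  have "(\<Sum>j=1..n-1. matQ2 n q l j * v j) = (\<Sum>j=1..n-1. (if l = j then v j else 0) + q l / q n * v j)"
    using assms(1) by (intro sum.cong refl) (auto simp: matQ2_def kdelta_def field_simps)
  then show ?thesis using assms(2) by (simp add: sum.distrib sum_distrib_left)
qed

lemma matB_matA_eq:
  assumes "q n \<noteq> 0" "i \<in> {1..n-1}" "j \<in> {1..n-1}"
  shows "matB n (matA n q A0) i j = - (\<Sum>l=1..n-1. A0 i l * matQ2 n q l j)"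
proof -
  let ?A = "matA n q A0"
  have inner: "(\<Sum>l=1..n. matE n i k * ?A k l * matE n j l) = matE n i k * (?A k n - ?A k j)" for k
  proof -
    have "(\<Sum>l=1..n. matE n i k * ?A k l * matE n j l) = matE n i k * (\<Sum>l=1..n. matE n j l * ?A k l)"
      by (simp add: sum_distrib_left mult_ac)
    then show ?thesis using sum_matE_mult[OF assms(3), of "?A k"] by simp
  qed
  have "matB n ?A i j = - ((?A n n - ?A n j) - (?A i n - ?A i j))"
    unfolding matB_def inner sum_matE_mult[OF assms(2)] ..
  also have "\<dots> = - A0 i j - (\<Sum>k=1..n-1. q k / q n * A0 i k)"
    using assms(2,3) by (auto simp: matA_def)
  also have "\<dots> = - (\<Sum>l=1..n-1. (if l = j then A0 i l else 0) + q l / q n * A0 i l)"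
    using assms(3) by (simp add: sum.distrib)
  also have "\<dots> = - (\<Sum>l=1..n-1. A0 i l * matQ2 n q l j)"
    using assms(1) by (intro arg_cong[where f=uminus] sum.cong refl)
      (auto simp: matQ2_def kdelta_def field_simps)
  finally show ?thesis .
qed

lemma Qbar_offdiag_eq:
  assumes "finite I"
    and "\<forall>i\<in>I. \<forall>j\<in>I. i \<noteq> j \<longrightarrow> (\<Sum>k\<in>I. Qbar k i * matQ1 q k j) = 0"
    and "i \<in> I" "j \<in> I" "j \<noteq> i"
  shows "Qbar j i = (\<Sum>k\<in>I. Qbar k i * q k)"
proof -
  have "(\<Sum>k\<in>I. Qbar k i * matQ1 q k j) = (\<Sum>k\<in>I. Qbar k i * q k - (if k = j then Qbar k i else 0))"
    by (intro sum.cong refl) (auto simp: matQ1_def kdelta_def algebra_simps)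
  also have "\<dots> = (\<Sum>k\<in>I. Qbar k i * q k) - Qbar j i"
    using assms(1,4) by (simp add: sum_subtractf)
  finally show ?thesis using assms(2-5) by simp
qed

lemma Qbar_eta_eq:
  assumes "\<forall>i\<in>{1..n-1}. \<forall>j\<in>{1..n-1}. i \<noteq> j \<longrightarrow> (\<Sum>k=1..n-1. Qbar k i * matQ1 q k j) = 0"
    and "i \<in> {1..n-1}"
  shows "(1 + (\<Sum>j=1..n-1. exp (u j))) * (\<Sum>k=1..n-1. Qbar k i * eta n q u k)
       = (\<Sum>k=1..n-1. Qbar k i * q k) + ((\<Sum>k=1..n-1. Qbar k i * q k) - Qbar i i) * exp (u i)"
proof -
  define S where "S = 1 + (\<Sum>j=1..n-1. exp (u j))"
  define c where "c = (\<Sum>k=1..n-1. Qbar k i * q k)"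
  have "S > 0" unfolding S_def by (smt (verit) exp_gt_zero sum_nonneg)
  have "(\<Sum>k=1..n-1. Qbar k i * exp (u k))
      = (\<Sum>k=1..n-1. c * exp (u k) + (if k = i then (Qbar i i - c) * exp (u i) else 0))"
    using Qbar_offdiag_eq[OF _ assms(1,2)] assms(2)
    by (intro sum.cong refl) (auto simp: c_def algebra_simps)
  also have "\<dots> = c * (S - 1) + (Qbar i i - c) * exp (u i)"
    using assms(2) by (simp add: sum.distrib sum_distrib_left S_def)
  finally have "(\<Sum>k=1..n-1. Qbar k i * exp (u k)) = c * (S - 1) + (Qbar i i - c) * exp (u i)" .
  moreover have "(\<Sum>k=1..n-1. Qbar k i * eta n q u k) = c - (\<Sum>k=1..n-1. Qbar k i * exp (u k)) / S"
    by (simp add: eta_def S_def c_def right_diff_distrib sum_subtractf sum_divide_distrib)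
  then have "S * (\<Sum>k=1..n-1. Qbar k i * eta n q u k) = S * c - (\<Sum>k=1..n-1. Qbar k i * exp (u k))"
    using \<open>S > 0\<close> by (simp add: right_diff_distrib)
  ultimately show ?thesis
    unfolding S_def[symmetric] c_def[symmetric] by (simp add: algebra_simps)
qed

lemma XBtilde_orthogonal_grad_HD:
  assumes "q n \<noteq> 0"
    and offdiag: "\<forall>i\<in>{1..n-1}. \<forall>j\<in>{1..n-1}. i \<noteq> j \<longrightarrow>
           (\<Sum>k=1..n-1. Qbar k i * matQ1 q k j) = 0"
    and skew: "\<forall>i\<in>{1..n-1}. \<forall>j\<in>{1..n-1}.
           (\<Sum>k=1..n-1. \<Sum>l=1..n-1. Qbar i k * d k * A0 k l * matQ2 n q l j)
         = - (\<Sum>k=1..n-1. \<Sum>l=1..n-1. Qbar j k * d k * A0 k l * matQ2 n q l i)"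
  shows "(\<Sum>i=1..n-1. (d i * (\<Sum>k=1..n-1. Qbar k i * q k)
            + d i * ((\<Sum>k=1..n-1. Qbar k i * q k) - Qbar i i) * exp (u i))
          * XBtilde n (matB n (matA n q A0)) q u i) = 0"
proof -
  define I where "I = {1..n-1}"
  define S where "S = 1 + (\<Sum>j\<in>I. exp (u j))"
  define e where "e = eta n q u"
  define P where "P k i = Qbar k i * d i" for k i
  define R where "R i j = (\<Sum>l\<in>I. A0 i l * matQ2 n q l j)" for i j
  have grad: "d i * (\<Sum>k\<in>I. Qbar k i * q k) + d i * ((\<Sum>k\<in>I. Qbar k i * q k) - Qbar i i) * exp (u i)
      = S * (\<Sum>k\<in>I. P k i * e k)" if "i \<in> I" for i
  proof -
    have "S * (\<Sum>k\<in>I. P k i * e k) = d i * (S * (\<Sum>k\<in>I. Qbar k i * e k))"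
      by (simp add: P_def sum_distrib_left mult_ac)
    also have "\<dots> = d i * ((\<Sum>k\<in>I. Qbar k i * q k) + ((\<Sum>k\<in>I. Qbar k i * q k) - Qbar i i) * exp (u i))"
      using Qbar_eta_eq[OF offdiag, of i u] that by (simp add: I_def S_def e_def)
    finally show ?thesis by (simp add: algebra_simps)
  qed
  have field: "XBtilde n (matB n (matA n q A0)) q u i = - (\<Sum>j\<in>I. R i j * e j)" if "i \<in> I" for i
    using matB_matA_eq[of q n, OF assms(1)] that
    by (simp add: XBtilde_def I_def R_def e_def sum_negf)
  have PR: "(\<Sum>i\<in>I. P k i * R i j) = (\<Sum>i=1..n-1. \<Sum>l=1..n-1. Qbar k i * d i * A0 i l * matQ2 n q l j)"
    for k j by (simp add: I_def P_def R_def sum_distrib_left mult.assoc)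
  have PR_skew: "\<forall>k\<in>I. \<forall>j\<in>I. (\<Sum>i\<in>I. P k i * R i j) = - (\<Sum>i\<in>I. P j i * R i k)"
    unfolding PR unfolding I_def by (rule skew)
  have "(\<Sum>i\<in>I. (d i * (\<Sum>k\<in>I. Qbar k i * q k) + d i * ((\<Sum>k\<in>I. Qbar k i * q k) - Qbar i i) * exp (u i))
          * XBtilde n (matB n (matA n q A0)) q u i)
      = (\<Sum>i\<in>I. - S * ((\<Sum>k\<in>I. P k i * e k) * (\<Sum>j\<in>I. R i j * e j)))"
    by (intro sum.cong refl) (simp add: grad field)
  also have "\<dots> = - S * (\<Sum>i\<in>I. (\<Sum>k\<in>I. P k i * e k) * (\<Sum>j\<in>I. R i j * e j))"
    by (rule sum_distrib_left[symmetric])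
  also have "\<dots> = - S * (\<Sum>k\<in>I. \<Sum>j\<in>I. e k * (\<Sum>i\<in>I. P k i * R i j) * e j)"
    by (simp only: sum_transpose_mult_mult)
  also have "\<dots> = 0"
    using skew_quadratic_form_eq_0[OF PR_skew] by simp
  finally show ?thesis by (simp add: I_def)
qed

lemma constant_of_motion_HD:
  assumes "q n \<noteq> 0"
    and "\<forall>i\<in>{1..n-1}. \<forall>j\<in>{1..n-1}. i \<noteq> j \<longrightarrow>
           (\<Sum>k=1..n-1. Qbar k i * matQ1 q k j) = 0"
    and "\<forall>i\<in>{1..n-1}. \<forall>j\<in>{1..n-1}.
           (\<Sum>k=1..n-1. \<Sum>l=1..n-1. Qbar i k * d k * A0 k l * matQ2 n q l j)
         = - (\<Sum>k=1..n-1. \<Sum>l=1..n-1. Qbar j k * d k * A0 k l * matQ2 n q l i)"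
  shows "constant_of_motion (n-1) (XBtilde n (matB n (matA n q A0)) q) UNIV
           (\<lambda>u. (\<Sum>i=1..n-1. d i * (\<Sum>k=1..n-1. Qbar k i * q k) * u i)
              + (\<Sum>i=1..n-1. d i * ((\<Sum>k=1..n-1. Qbar k i * q k) - Qbar i i) * exp (u i)))"
proof -
  define c where "c i = (\<Sum>k=1..n-1. Qbar k i * q k)" for i
  have "constant_of_motion (n-1) (XBtilde n (matB n (matA n q A0)) q) UNIV
      (\<lambda>u. \<Sum>i=1..n-1. d i * c i * u i + d i * (c i - Qbar i i) * exp (u i))"
  proof (rule constant_of_motion_sum_separable
      [where f' = "\<lambda>i y. d i * c i + d i * (c i - Qbar i i) * exp y"])
    show "((\<lambda>y. d i * c i * y + d i * (c i - Qbar i i) * exp y) has_real_derivative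
        d i * c i + d i * (c i - Qbar i i) * exp y) (at y)" for i y
      by (auto intro!: derivative_eq_intros)
    show "(\<Sum>i=1..n-1. (d i * c i + d i * (c i - Qbar i i) * exp (u i))
        * XBtilde n (matB n (matA n q A0)) q u i) = 0" for u
      unfolding c_def by (rule XBtilde_orthogonal_grad_HD[OF assms])
  qed
  then show ?thesis by (simp add: sum.distrib c_def)
qed

definition log_ratio :: "nat \<Rightarrow> (nat \<Rightarrow> real) \<Rightarrow> nat \<Rightarrow> real" where
  "log_ratio n x i = ln (x i / x n)"

lemma simplex_interior_sum_but_last:
  assumes "x \<in> simplex_interior n"
  shows "(\<Sum>j=1..n-1. x j) = 1 - x n"
proof -
  have "n \<noteq> 0"
    by (rule ccontr) (use assms in \<open>simp add: simplex_interior_def\<close>)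
  then show ?thesis
    using assms sum_atLeastAtMost_split_last[of n x] by (simp add: simplex_interior_def)
qed

lemma exp_log_ratio:
  assumes "x \<in> simplex_interior n" "i \<in> {1..n-1}"
  shows "exp (log_ratio n x i) = x i / x n"
proof -
  have "x i > 0" "x n > 0" using assms by (auto simp: simplex_interior_def)
  then show ?thesis by (simp add: log_ratio_def)
qed

lemma eta_log_ratio:
  assumes "x \<in> simplex_interior n" "j \<in> {1..n-1}"
  shows "eta n q (log_ratio n x) j = q j - x j"
proof -
  have "x n > 0" using assms by (auto simp: simplex_interior_def)
  have "1 + (\<Sum>k=1..n-1. exp (log_ratio n x k)) = 1 + (\<Sum>k=1..n-1. x k) / x n"
    using exp_log_ratio[OF assms(1)] by (simp add: sum_divide_distrib)
  also have "\<dots> = 1 / x n"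
    using simplex_interior_sum_but_last[OF assms(1)] \<open>x n > 0\<close> by (simp add: field_simps)
  finally show ?thesis
    using exp_log_ratio[OF assms] \<open>x n > 0\<close> by (simp add: eta_def)
qed

lemma XBtilde_log_ratio:
  assumes "(\<Sum>i=1..n. q i) = 1" "q n \<noteq> 0" "x \<in> simplex_interior n" "i \<in> {1..n-1}"
  shows "XBtilde n (matB n (matA n q A0)) q (log_ratio n x) i = (\<Sum>j=1..n. matA n q A0 i j * x j)"
proof -
  have "n \<noteq> 0" using assms(4) by auto
  have q_but_last: "(\<Sum>j=1..n-1. q j) = 1 - q n"
    using assms(1) sum_atLeastAtMost_split_last[of n q] \<open>n \<noteq> 0\<close> by simp
  have Q2_eta: "(\<Sum>j=1..n-1. matQ2 n q l j * (q j - x j)) = q l / q n * x n - x l"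
    if "l \<in> {1..n-1}" for l
  proof -
    have "(\<Sum>j=1..n-1. matQ2 n q l j * (q j - x j)) = (q l - x l) + q l / q n * (\<Sum>j=1..n-1. q j - x j)"
      by (rule matQ2_mult[of q n, OF assms(2) that])
    also have "(\<Sum>j=1..n-1. q j - x j) = x n - q n"
      using q_but_last simplex_interior_sum_but_last[OF assms(3)] by (simp add: sum_subtractf)
    also have "(q l - x l) + q l / q n * (x n - q n) = q l / q n * x n - x l"
      using assms(2) by (simp add: field_simps)
    finally show ?thesis .
  qed
  have "XBtilde n (matB n (matA n q A0)) q (log_ratio n x) i
      = (\<Sum>j=1..n-1. (\<Sum>l=1..n-1. - A0 i l * matQ2 n q l j) * (q j - x j))"
    using matB_matA_eq[of q n, OF assms(2) assms(4)] eta_log_ratio[OF assms(3)]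
    by (simp add: XBtilde_def sum_negf)
  also have "\<dots> = (\<Sum>l=1..n-1. - A0 i l * (q l / q n * x n - x l))"
    unfolding sum_matrix_mult_assoc by (intro sum.cong refl) (simp only: Q2_eta)
  also have "\<dots> = (\<Sum>l=1..n-1. A0 i l * x l) - (\<Sum>k=1..n-1. q k / q n * A0 i k) * x n"
    by (simp add: algebra_simps sum_subtractf sum_distrib_left sum_distrib_right)
  also have "\<dots> = (\<Sum>j=1..n-1. matA n q A0 i j * x j) + matA n q A0 i n * x n"
  proof -
    have "(\<Sum>j=1..n-1. matA n q A0 i j * x j) = (\<Sum>j=1..n-1. A0 i j * x j)"
      using assms(4) by (intro sum.cong refl) (auto simp: matA_def)
    moreover have "matA n q A0 i n = - (\<Sum>k=1..n-1. q k / q n * A0 i k)"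
      using assms(4) by (auto simp: matA_def)
    ultimately show ?thesis by simp
  qed
  also have "\<dots> = (\<Sum>j=1..n. matA n q A0 i j * x j)"
    using sum_atLeastAtMost_split_last[of n "\<lambda>j. matA n q A0 i j * x j"] \<open>n \<noteq> 0\<close> by simp
  finally show ?thesis .
qed

lemma replicator_log_ratio_deriv:
  assumes "integral_curve n (replicator n A) (simplex_interior n) T x" "t \<in> T" "i \<in> {1..n}"
  shows "((\<lambda>s. log_ratio n (x s) i) has_real_derivative
           (\<Sum>j=1..n. A i j * x t j) - (\<Sum>j=1..n. A n j * x t j)) (at t within T)"
proof -
  have n: "n \<in> {1..n}" using assms(3) by simp
  define R where "R k = (\<Sum>j=1..n. A k j * x t j) - (\<Sum>k=1..n. \<Sum>j=1..n. x t k * A k j * x t j)" for k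
  have dx: "((\<lambda>s. x s k) has_real_derivative x t k * R k) (at t within T)" if "k \<in> {1..n}" for k
    using assms(1,2) that by (simp add: integral_curve_def replicator_def R_def)
  have "x t i > 0" "x t n > 0"
    using assms(1,2) assms(3) n by (auto simp: integral_curve_def simplex_interior_def)
  then have "((\<lambda>s. ln (x s i / x s n)) has_real_derivative
      inverse (x t i / x t n) * ((x t i * R i * x t n - x t i * (x t n * R n)) / (x t n * x t n)))
      (at t within T)"
    by (intro DERIV_chain2[OF DERIV_ln] DERIV_divide dx assms(3) n) simp_all
  moreover have "inverse (x t i / x t n) * ((x t i * R i * x t n - x t i * (x t n * R n)) / (x t n * x t n))
      = R i - R n"
    using \<open>x t i > 0\<close> \<open>x t n > 0\<close> by (simp add: field_simps)
  ultimately show ?thesis by (simp add: log_ratio_def R_def)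
qed

lemma integral_curve_log_ratio:
  assumes "(\<Sum>i=1..n. q i) = 1" "q n \<noteq> 0"
    and "integral_curve n (replicator n (matA n q A0)) (simplex_interior n) T x"
  shows "integral_curve (n-1) (XBtilde n (matB n (matA n q A0)) q) UNIV T (\<lambda>t. log_ratio n (x t))"
  unfolding integral_curve_def
proof (intro conjI ballI)
  show "is_interval T" using assms(3) by (simp add: integral_curve_def)
  fix t i assume "t \<in> T" "i \<in> {1..n-1}"
  then have "x t \<in> simplex_interior n" "i \<in> {1..n}" "i \<noteq> n"
    using assms(3) by (auto simp: integral_curve_def)
  then show "((\<lambda>s. log_ratio n (x s) i) has_real_derivative
      XBtilde n (matB n (matA n q A0)) q (log_ratio n (x t)) i) (at t within T)"
    using replicator_log_ratio_deriv[OF assms(3) \<open>t \<in> T\<close> \<open>i \<in> {1..n}\<close>]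
    by (simp add: XBtilde_log_ratio[OF assms(1,2) \<open>x t \<in> simplex_interior n\<close> \<open>i \<in> {1..n-1}\<close>]
        matA_def)
qed simp

theorem corollary3p2:
  fixes n :: nat and q :: "nat \<Rightarrow> real" and A0 Qbar :: "nat \<Rightarrow> nat \<Rightarrow> real"
    and d :: "nat \<Rightarrow> real"
  assumes "n \<ge> 2"
    and "(\<Sum>i=1..n. q i) = 1"
    and "q n \<noteq> 0"
    and "\<forall>i\<in>{1..n-1}. \<forall>j\<in>{1..n-1}. i \<noteq> j \<longrightarrow>
           (\<Sum>k=1..n-1. Qbar k i * matQ1 q k j) = 0"
    and "\<forall>i\<in>{1..n-1}. \<forall>j\<in>{1..n-1}.
           (\<Sum>k=1..n-1. \<Sum>l=1..n-1. Qbar i k * d k * A0 k l * matQ2 n q l j)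
         = - (\<Sum>k=1..n-1. \<Sum>l=1..n-1. Qbar j k * d k * A0 k l * matQ2 n q l i)"
  shows "constant_of_motion (n-1) (XBtilde n (matB n (matA n q A0)) q) UNIV
           (\<lambda>u. (\<Sum>i=1..n-1. d i * (\<Sum>k=1..n-1. Qbar k i * q k) * u i)
              + (\<Sum>i=1..n-1. d i * ((\<Sum>k=1..n-1. Qbar k i * q k) - Qbar i i) * exp (u i)))
       \<and> constant_of_motion n (replicator n (matA n q A0)) (simplex_interior n)
           (\<lambda>x. (\<Sum>i=1..n-1. d i * (\<Sum>k=1..n-1. Qbar k i * q k) * ln (x i / x n))
              + (\<Sum>i=1..n-1. d i * ((\<Sum>k=1..n-1. Qbar k i * q k) - Qbar i i) * (x i / x n)))"
proof -
  have HD: "constant_of_motion (n-1) (XBtilde n (matB n (matA n q A0)) q) UNIV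
           (\<lambda>u. (\<Sum>i=1..n-1. d i * (\<Sum>k=1..n-1. Qbar k i * q k) * u i)
              + (\<Sum>i=1..n-1. d i * ((\<Sum>k=1..n-1. Qbar k i * q k) - Qbar i i) * exp (u i)))"
    (is "constant_of_motion _ _ _ ?H")
    by (rule constant_of_motion_HD[OF assms(3-5)])
  moreover have "constant_of_motion n (replicator n (matA n q A0)) (simplex_interior n)
           (\<lambda>x. (\<Sum>i=1..n-1. d i * (\<Sum>k=1..n-1. Qbar k i * q k) * ln (x i / x n))
              + (\<Sum>i=1..n-1. d i * ((\<Sum>k=1..n-1. Qbar k i * q k) - Qbar i i) * (x i / x n)))"
  proof (rule constant_of_motion_pullback[where H = ?H and \<psi> = "log_ratio n", OF HD])
    show "integral_curve (n-1) (XBtilde n (matB n (matA n q A0)) q) UNIV T (\<lambda>t. log_ratio n (\<gamma> t))"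
      if "integral_curve n (replicator n (matA n q A0)) (simplex_interior n) T \<gamma>" for T \<gamma>
      using integral_curve_log_ratio[OF assms(2,3) that] .
    show "(\<Sum>i=1..n-1. d i * (\<Sum>k=1..n-1. Qbar k i * q k) * ln (x i / x n))
        + (\<Sum>i=1..n-1. d i * ((\<Sum>k=1..n-1. Qbar k i * q k) - Qbar i i) * (x i / x n))
      = ?H (log_ratio n x)" if "x \<in> simplex_interior n" for x
      by (simp add: exp_log_ratio[OF that]) (simp add: log_ratio_def)
  qed
  ultimately show ?thesis ..
qed

end
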